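(* Let $\mathfrak g\subset\mathfrak{gl}(V,V_* )$ be a subalgebra which is a union of reductive subalgebras, i.e. $\mathfrak g=\bigcup_n\mathfrak g_n$ for nested finite-dimensional reductive Lie algebras $\mathfrak g_n\subset\mathfrak g_{n+1}$. Then the linear nilradical $\mathfrak n_{\mathfrak g}$ is contained in the center $\mathfrak z(\mathfrak g)$ of $\mathfrak g$.
   Context: Ground field $\mathbb C$. $V$, $V_*$ are countable-dimensional vector spaces with a nondegenerate pairing $V\times V_*\to\mathbb C$; $\mathfrak{gl}(V,V_* )=V\otimes V_*$ with bracket coming from the associative product $(v\otimes w)(v'\otimes w')=\langle v',w\rangle v\otimes w'$, acting on $V$ by $(v\otimes w)u=\langle u,w\rangle v$. The locally solvable radical of a locally finite Lie algebra is its largest locally solvable ideal (locally solvable: every finite subset lies in a finite-dimensional solvable subalgebra). For $\mathfrak g\subset\mathfrak{gl}(V,V_* )$ the linear nilradical $\mathfrak n_{\mathfrak g}$ is the set of elements of the locally solvable radical of $\mathfrak g$ which are nilpotent endomorphisms of $V$. *)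

theory Defs
  imports Complex_Main "HOL-Library.Function_Algebras" "HOL-Library.Countable_Set"
begin

text \<open>Elements of gl(V,V_*) = V (x) V_* are
  identified with the endomorphisms u |-> sum_i pair u (w_i) v_i of V that they
  define (this identification is injective by nondegeneracy); the associative
  product of gl(V,V_*) becomes composition and the Lie bracket becomes the
  commutator of endomorphisms.\<close>

definition escale :: "(complex \<Rightarrow> 'v \<Rightarrow> 'v) \<Rightarrow> complex \<Rightarrow> ('v \<Rightarrow> 'v) \<Rightarrow> ('v \<Rightarrow> 'v)" where
  "escale sc c f = (\<lambda>u. sc c (f u))"

definition comm :: "('v::ab_group_add \<Rightarrow> 'v) \<Rightarrow> ('v \<Rightarrow> 'v) \<Rightarrow> ('v \<Rightarrow> 'v)" where
  "comm f g = (\<lambda>u. f (g u) - g (f u))"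

definition countable_dimensional :: "(complex \<Rightarrow> 'a::ab_group_add \<Rightarrow> 'a) \<Rightarrow> bool" where
  "countable_dimensional s \<longleftrightarrow>
     (\<exists>B. countable B \<and> infinite B \<and> \<not> module.dependent s B \<and> module.span s B = UNIV)"

definition nondegenerate_pairing :: "('v::zero \<Rightarrow> 'w::zero \<Rightarrow> complex) \<Rightarrow> bool" where
  "nondegenerate_pairing p \<longleftrightarrow>
     (\<forall>v. (\<forall>w. p v w = 0) \<longrightarrow> v = 0) \<and> (\<forall>w. (\<forall>v. p v w = 0) \<longrightarrow> w = 0)"

definition bilinear_pairing ::
  "(complex \<Rightarrow> 'v::ab_group_add \<Rightarrow> 'v) \<Rightarrow> (complex \<Rightarrow> 'w::ab_group_add \<Rightarrow> 'w) \<Rightarrow> ('v \<Rightarrow> 'w \<Rightarrow> complex) \<Rightarrow> bool" where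
  "bilinear_pairing sc scw p \<longleftrightarrow>
     (\<forall>x y w. p (x + y) w = p x w + p y w) \<and> (\<forall>c x w. p (sc c x) w = c * p x w) \<and>
     (\<forall>v x y. p v (x + y) = p v x + p v y) \<and> (\<forall>c v x. p v (scw c x) = c * p v x)"

definition glVV :: "(complex \<Rightarrow> 'v::ab_group_add \<Rightarrow> 'v) \<Rightarrow> ('v \<Rightarrow> 'w \<Rightarrow> complex) \<Rightarrow> ('v \<Rightarrow> 'v) set" where
  "glVV sc p = {f. \<exists>(n::nat) v w. f = (\<lambda>u. \<Sum>i<n. sc (p u (w i)) (v i))}"

definition lie_subalgebra :: "(complex \<Rightarrow> 'v::ab_group_add \<Rightarrow> 'v) \<Rightarrow> ('v \<Rightarrow> 'v) set \<Rightarrow> bool" where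
  "lie_subalgebra sc L \<longleftrightarrow> module.subspace (escale sc) L \<and> (\<forall>x\<in>L. \<forall>y\<in>L. comm x y \<in> L)"

definition lie_ideal :: "(complex \<Rightarrow> 'v::ab_group_add \<Rightarrow> 'v) \<Rightarrow> ('v \<Rightarrow> 'v) set \<Rightarrow> ('v \<Rightarrow> 'v) set \<Rightarrow> bool" where
  "lie_ideal sc L I \<longleftrightarrow> I \<subseteq> L \<and> module.subspace (escale sc) I \<and> (\<forall>x\<in>L. \<forall>y\<in>I. comm x y \<in> I)"

definition fin_dim :: "(complex \<Rightarrow> 'v::ab_group_add \<Rightarrow> 'v) \<Rightarrow> ('v \<Rightarrow> 'v) set \<Rightarrow> bool" where
  "fin_dim sc L \<longleftrightarrow> (\<exists>B. finite B \<and> module.span (escale sc) B = L)"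

fun derived :: "(complex \<Rightarrow> 'v::ab_group_add \<Rightarrow> 'v) \<Rightarrow> nat \<Rightarrow> ('v \<Rightarrow> 'v) set \<Rightarrow> ('v \<Rightarrow> 'v) set" where
  "derived sc 0 L = L"
| "derived sc (Suc k) L =
     module.span (escale sc) {comm x y | x y. x \<in> derived sc k L \<and> y \<in> derived sc k L}"

definition solvable :: "(complex \<Rightarrow> 'v::ab_group_add \<Rightarrow> 'v) \<Rightarrow> ('v \<Rightarrow> 'v) set \<Rightarrow> bool" where
  "solvable sc L \<longleftrightarrow> (\<exists>k. derived sc k L = {0})"

definition lie_center :: "('v::ab_group_add \<Rightarrow> 'v) set \<Rightarrow> ('v \<Rightarrow> 'v) set" where
  "lie_center L = {x \<in> L. \<forall>y\<in>L. comm x y = 0}"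

text \<open>A finite-dimensional Lie algebra is reductive iff its (solvable) radical, i.e. its
  largest solvable ideal, equals its center.\<close>
definition reductive :: "(complex \<Rightarrow> 'v::ab_group_add \<Rightarrow> 'v) \<Rightarrow> ('v \<Rightarrow> 'v) set \<Rightarrow> bool" where
  "reductive sc L \<longleftrightarrow>
     lie_ideal sc L (lie_center L) \<and> solvable sc (lie_center L) \<and>
     (\<forall>I. lie_ideal sc L I \<and> solvable sc I \<longrightarrow> I \<subseteq> lie_center L)"

definition locally_solvable :: "(complex \<Rightarrow> 'v::ab_group_add \<Rightarrow> 'v) \<Rightarrow> ('v \<Rightarrow> 'v) set \<Rightarrow> bool" where
  "locally_solvable sc L \<longleftrightarrow>
     (\<forall>F. finite F \<and> F \<subseteq> L \<longrightarrow>
        (\<exists>S. F \<subseteq> S \<and> S \<subseteq> L \<and> lie_subalgebra sc S \<and> fin_dim sc S \<and> solvable sc S))"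

definition locally_solvable_radical :: "(complex \<Rightarrow> 'v::ab_group_add \<Rightarrow> 'v) \<Rightarrow> ('v \<Rightarrow> 'v) set \<Rightarrow> ('v \<Rightarrow> 'v) set" where
  "locally_solvable_radical sc L =
     (THE R. lie_ideal sc L R \<and> locally_solvable sc R \<and>
        (\<forall>I. lie_ideal sc L I \<and> locally_solvable sc I \<longrightarrow> I \<subseteq> R))"

definition nilpotent_endo :: "('v::zero \<Rightarrow> 'v) \<Rightarrow> bool" where
  "nilpotent_endo f \<longleftrightarrow> (\<exists>k. \<forall>u. (f ^^ k) u = 0)"

definition linear_nilradical :: "(complex \<Rightarrow> 'v::ab_group_add \<Rightarrow> 'v) \<Rightarrow> ('v \<Rightarrow> 'v) set \<Rightarrow> ('v \<Rightarrow> 'v) set" where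
  "linear_nilradical sc L = {x \<in> locally_solvable_radical sc L. nilpotent_endo x}"

end

theory Submission
  imports Defs
begin

text \<open>
  We show that the locally solvable radical of g is exactly its center; the linear nilradical,
  being a subset of the radical, then lies in the center.

  The center is a locally solvable ideal: it is a subspace (elements of gl(V,V_*) act linearly
  on V), it is clearly an ideal, and it is abelian, so the span of any finite subset of it is a
  finite-dimensional solvable subalgebra.  Conversely, if I is a locally solvable ideal of g, then
  I \<inter> g_n is an ideal of g_n which lies in a finite-dimensional subspace, hence inside a
  finite-dimensional solvable subalgebra of I, hence is solvable.  Since g_n is reductive,
  I \<inter> g_n is central in g_n.  Any two elements of g meet in a common g_n, so I is central in g.
  Thus the center is the largest locally solvable ideal, i.e. the radical.
\<close>

lemma vector_space_escale:
  assumes "vector_space sc"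
  shows "vector_space (escale sc)"
proof -
  interpret V: vector_space sc by fact
  show ?thesis
    by unfold_locales
      (auto simp: escale_def fun_eq_iff V.scale_right_distrib V.scale_left_distrib)
qed

lemma glVV_linear:
  assumes vs: "vector_space sc" and bp: "bilinear_pairing sc scw p" and f: "f \<in> glVV sc p"
  shows "Vector_Spaces.linear sc sc f"
proof -
  interpret V: vector_space sc by fact
  obtain n :: nat and v w where f_eq: "f = (\<lambda>u. \<Sum>i<n. sc (p u (w i)) (v i))"
    using f by (auto simp: glVV_def)
  have p_add: "p (a + b) x = p a x + p b x" and p_scale: "p (sc c a) x = c * p a x" for a b c x
    using bp unfolding bilinear_pairing_def by blast+
  show ?thesis
    unfolding Vector_Spaces.linear_iff
    by (simp add: vs f_eq p_add p_scale V.scale_left_distrib V.scale_sum_right sum.distrib)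
qed

lemma derived_mono:
  assumes "vector_space sc" "A \<subseteq> B"
  shows "derived sc k A \<subseteq> derived sc k B"
proof (induction k)
  case 0
  then show ?case using assms by simp
next
  case (Suc k)
  interpret E: vector_space "escale sc" using vector_space_escale assms(1) .
  show ?case using Suc by (auto intro!: E.span_mono)
qed

lemma derived_contains_zero:
  assumes "vector_space sc" "0 \<in> A"
  shows "0 \<in> derived sc k A"
proof (cases k)
  case 0
  then show ?thesis using assms by simp
next
  case (Suc m)
  interpret E: vector_space "escale sc" using vector_space_escale assms(1) .
  show ?thesis using Suc E.span_zero by simp
qed

lemma solvable_subset:
  assumes "vector_space sc" "solvable sc S" "J \<subseteq> S" "0 \<in> J"
  shows "solvable sc J"
proof -
  obtain k where "derived sc k S = {0}" using assms(2) unfolding solvable_def by blast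
  then have "derived sc k J = {0}"
    using derived_mono[OF assms(1,3), of k] derived_contains_zero[OF assms(1,4), of k] by blast
  then show ?thesis unfolding solvable_def by blast
qed

text \<open>An abelian subspace is locally solvable: the span of a finite subset is a
  finite-dimensional subalgebra whose first derived algebra vanishes.\<close>
lemma abelian_locally_solvable:
  assumes vs: "vector_space sc" and A: "module.subspace (escale sc) A"
    and abelian: "\<And>x y. x \<in> A \<Longrightarrow> y \<in> A \<Longrightarrow> comm x y = 0"
  shows "locally_solvable sc A"
  unfolding locally_solvable_def
proof (intro allI impI)
  interpret E: vector_space "escale sc" using vector_space_escale vs .
  fix F assume F: "finite F \<and> F \<subseteq> A"
  define S where "S = E.span F"
  have S_A: "S \<subseteq> A" unfolding S_def using F A E.span_minimal by blast
  have "0 \<in> S" unfolding S_def by (rule E.span_zero)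
  have brackets: "{comm x y | x y. x \<in> S \<and> y \<in> S} = {0}"
    using abelian S_A \<open>0 \<in> S\<close> by fastforce
  have closed: "comm x y \<in> S" if "x \<in> S" "y \<in> S" for x y
    using abelian S_A that \<open>0 \<in> S\<close> by (metis subsetD)
  have "lie_subalgebra sc S"
    unfolding lie_subalgebra_def S_def using closed E.subspace_span[of F] by (simp add: S_def)
  moreover have "fin_dim sc S" unfolding fin_dim_def S_def using F by blast
  moreover have "solvable sc S"
    unfolding solvable_def using brackets by (intro exI[of _ 1]) simp
  ultimately show "\<exists>S. F \<subseteq> S \<and> S \<subseteq> A \<and> lie_subalgebra sc S \<and> fin_dim sc S \<and> solvable sc S"
    using S_A F E.span_superset S_def by blast
qed

text \<open>The center of a Lie algebra of linear endomorphisms is a subspace, hence an ideal.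
  Linearity of y makes the bracket [-, y] linear in its first argument.\<close>
lemma lie_center_ideal:
  assumes vs: "vector_space sc" and g: "module.subspace (escale sc) g"
    and lin: "\<And>y. y \<in> g \<Longrightarrow> Vector_Spaces.linear sc sc y"
  shows "lie_ideal sc g (lie_center g)"
proof -
  interpret V: vector_space sc by fact
  interpret E: vector_space "escale sc" using vector_space_escale vs .
  have add: "y (a + b) = y a + y b" and scale: "y (sc c a) = sc c (y a)" if "y \<in> g" for y a b c
    using lin[OF that] unfolding Vector_Spaces.linear_iff by blast+
  have zero: "y 0 = 0" if "y \<in> g" for y
    using add[OF that, of 0 0] by simp
  have comm_add: "comm (x + z) y = comm x y + comm z y" if "y \<in> g" for x z y
    by (simp add: comm_def fun_eq_iff add[OF that])
  have comm_scale: "comm (escale sc c x) y = escale sc c (comm x y)" if "y \<in> g" for x y c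
    by (simp add: comm_def escale_def fun_eq_iff scale[OF that] V.scale_right_diff_distrib)
  have escale_zero: "escale sc c 0 = 0" for c
    by (simp add: escale_def fun_eq_iff)
  have center_subspace: "E.subspace (lie_center g)"
    unfolding E.subspace_def
  proof (intro conjI ballI allI)
    show "0 \<in> lie_center g"
      using E.subspace_0[OF g] zero unfolding lie_center_def by (simp add: comm_def fun_eq_iff)
  next
    fix x z assume "x \<in> lie_center g" "z \<in> lie_center g"
    then show "x + z \<in> lie_center g"
      using E.subspace_add[OF g] unfolding lie_center_def by (simp add: comm_add)
  next
    fix c x assume "x \<in> lie_center g"
    then show "escale sc c x \<in> lie_center g"
      using E.subspace_scale[OF g] unfolding lie_center_def by (simp add: comm_scale escale_zero)
  qed
  have "comm x y \<in> lie_center g" if "x \<in> g" "y \<in> lie_center g" for x y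
  proof -
    have "comm x y = 0"
      using that unfolding lie_center_def by (simp add: comm_def fun_eq_iff)
    then show ?thesis using E.subspace_0[OF center_subspace] by simp
  qed
  moreover have "lie_center g \<subseteq> g" unfolding lie_center_def by blast
  ultimately show ?thesis unfolding lie_ideal_def using center_subspace by blast
qed

lemma lie_ideal_inter_subalgebra:
  assumes vs: "vector_space sc" and I: "lie_ideal sc g I"
    and h: "lie_subalgebra sc h" and hg: "h \<subseteq> g"
  shows "lie_ideal sc h (I \<inter> h)"
proof -
  interpret E: vector_space "escale sc" using vector_space_escale vs .
  have "I \<subseteq> g" "E.subspace I" "\<And>x y. x \<in> g \<Longrightarrow> y \<in> I \<Longrightarrow> comm x y \<in> I"
    using I unfolding lie_ideal_def by blast+
  moreover have "E.subspace h" "\<And>x y. x \<in> h \<Longrightarrow> y \<in> h \<Longrightarrow> comm x y \<in> h"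
    using h unfolding lie_subalgebra_def by blast+
  ultimately show ?thesis
    unfolding lie_ideal_def using hg E.subspace_inter by blast
qed

text \<open>A subspace J of a locally solvable algebra I is solvable as soon as J is contained in some
  finite-dimensional space: a finite basis of J lies in a finite-dimensional solvable
  subalgebra of I, which then contains J.\<close>
lemma locally_solvable_fin_dim_subspace_solvable:
  assumes vs: "vector_space sc" and I: "locally_solvable sc I"
    and J: "module.subspace (escale sc) J" "J \<subseteq> I" and L: "fin_dim sc L" "J \<subseteq> L"
  shows "solvable sc J"
proof -
  interpret E: vector_space "escale sc" using vector_space_escale vs .
  obtain B where B: "finite B" "E.span B = L" using L(1) unfolding fin_dim_def by blast
  obtain C where C: "C \<subseteq> J" "E.independent C" "J \<subseteq> E.span C"
    by (rule E.maximal_independent_subset[of J])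
  have "C \<subseteq> E.span B" using C(1) B(2) L(2) by blast
  then have "finite C" using E.independent_span_bound[OF B(1) C(2)] by blast
  moreover have "C \<subseteq> I" using C(1) J(2) by (rule order_trans)
  ultimately have "\<exists>S. C \<subseteq> S \<and> S \<subseteq> I \<and> lie_subalgebra sc S \<and> fin_dim sc S \<and> solvable sc S"
    using I unfolding locally_solvable_def by blast
  then obtain S where S: "C \<subseteq> S" "S \<subseteq> I" "lie_subalgebra sc S" "solvable sc S"
    by blast
  have "E.subspace S" using S(3) unfolding lie_subalgebra_def by blast
  then have "E.span C \<subseteq> S" using S(1) by (rule E.span_minimal[rotated])
  then have "J \<subseteq> S" using C(3) by (rule order_trans[rotated])
  then show ?thesis using solvable_subset[OF vs S(4)] E.subspace_0[OF J(1)] by blast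
qed

lemma locally_solvable_ideal_central:
  assumes vs: "vector_space sc"
    and sub: "\<And>n. lie_subalgebra sc (gn n)" and fd: "\<And>n. fin_dim sc (gn n)"
    and red: "\<And>n. reductive sc (gn n)" and chain: "\<And>n. gn n \<subseteq> gn (Suc n)"
    and g: "g = (\<Union>n. gn n)"
    and I: "lie_ideal sc g I" "locally_solvable sc I"
  shows "I \<subseteq> lie_center g"
proof -
  have central_in_gn: "I \<inter> gn n \<subseteq> lie_center (gn n)" for n
  proof -
    have ideal: "lie_ideal sc (gn n) (I \<inter> gn n)"
      using lie_ideal_inter_subalgebra[OF vs I(1) sub] g by blast
    then have "solvable sc (I \<inter> gn n)"
      using locally_solvable_fin_dim_subspace_solvable[OF vs I(2) _ _ fd[of n]]
      unfolding lie_ideal_def by blast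
    then show ?thesis using red[of n] ideal unfolding reductive_def by blast
  qed
  have mono: "m \<le> n \<Longrightarrow> gn m \<subseteq> gn n" for m n
    by (rule lift_Suc_mono_le[of gn]) (use chain in auto)
  show ?thesis
  proof
    fix x assume "x \<in> I"
    then have "x \<in> g" using I(1) unfolding lie_ideal_def by blast
    have "comm x y = 0" if "y \<in> g" for y
    proof -
      obtain m k where "x \<in> gn m" "y \<in> gn k" using \<open>x \<in> g\<close> \<open>y \<in> g\<close> g by blast
      then have "x \<in> gn (max m k)" "y \<in> gn (max m k)"
        using mono[of m "max m k"] mono[of k "max m k"] by auto
      then show ?thesis
        using central_in_gn \<open>x \<in> I\<close> unfolding lie_center_def by blast
    qed
    then show "x \<in> lie_center g" using \<open>x \<in> g\<close> unfolding lie_center_def by blast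
  qed
qed

lemma locally_solvable_radical_eqI:
  assumes "lie_ideal sc g R" "locally_solvable sc R"
    and "\<And>I. lie_ideal sc g I \<Longrightarrow> locally_solvable sc I \<Longrightarrow> I \<subseteq> R"
  shows "locally_solvable_radical sc g = R"
  unfolding locally_solvable_radical_def
proof (rule the_equality)
  show "lie_ideal sc g R \<and> locally_solvable sc R \<and>
      (\<forall>I. lie_ideal sc g I \<and> locally_solvable sc I \<longrightarrow> I \<subseteq> R)"
    using assms by blast
next
  fix R' assume R': "lie_ideal sc g R' \<and> locally_solvable sc R' \<and>
      (\<forall>I. lie_ideal sc g I \<and> locally_solvable sc I \<longrightarrow> I \<subseteq> R')"
  have "R' \<subseteq> R" using R' assms(3) by blast
  moreover have "R \<subseteq> R'" using R' assms(1,2) by blast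
  ultimately show "R' = R" by (rule subset_antisym)
qed

theorem lemma2p3:
  fixes sc :: "complex \<Rightarrow> 'v::ab_group_add \<Rightarrow> 'v"
    and scw :: "complex \<Rightarrow> 'w::ab_group_add \<Rightarrow> 'w"
    and pair :: "'v \<Rightarrow> 'w \<Rightarrow> complex"
    and g :: "('v \<Rightarrow> 'v) set"
    and gn :: "nat \<Rightarrow> ('v \<Rightarrow> 'v) set"
  assumes "vector_space sc" and "vector_space scw"
    and "countable_dimensional sc" and "countable_dimensional scw"
    and "bilinear_pairing sc scw pair" and "nondegenerate_pairing pair"
    and "g \<subseteq> glVV sc pair" and "lie_subalgebra sc g"
    and "\<And>n. lie_subalgebra sc (gn n)"
    and "\<And>n. fin_dim sc (gn n)"
    and "\<And>n. reductive sc (gn n)"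
    and "\<And>n. gn n \<subseteq> gn (Suc n)"
    and "g = (\<Union>n. gn n)"
  shows "linear_nilradical sc g \<subseteq> lie_center g"
proof -
  have g_subspace: "module.subspace (escale sc) g"
    using assms(8) unfolding lie_subalgebra_def by blast
  have center_ideal: "lie_ideal sc g (lie_center g)"
    using lie_center_ideal[OF assms(1) g_subspace] glVV_linear[OF assms(1,5)] assms(7) by blast
  have "locally_solvable sc (lie_center g)"
  proof (rule abelian_locally_solvable[OF assms(1)])
    show "module.subspace (escale sc) (lie_center g)"
      using center_ideal unfolding lie_ideal_def by blast
    show "comm x y = 0" if "x \<in> lie_center g" "y \<in> lie_center g" for x y
      using that unfolding lie_center_def by blast
  qed
  then have "locally_solvable_radical sc g = lie_center g"
    by (rule locally_solvable_radical_eqI[OF center_ideal])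
      (rule locally_solvable_ideal_central[OF assms(1,9-13)])
  then show ?thesis unfolding linear_nilradical_def by blast
qed

end
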